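(* Let $S$ be a $0$-left cancellative semigroup admitting least common multiples. Then: (i) the set of open ultracharacters of $\mathfrak E(S)$ equals $\{\varphi_\sigma:\sigma \text{ is an open, quasi-maximal string in } S\}$; (ii) the set of ultracharacters of $\mathfrak E(S)$ that are not open equals $\{\hat\theta_u(\varphi): u\in\tilde S,\ \varphi \text{ a ground ultracharacter with } \varphi\in\hat F_u\}$.
   Context: $S$ has zero $0$, $S'=S\setminus\{0\}$; $0$-left cancellative: $st=sr\ne0\Rightarrow t=r$. $\tilde S=S\cup\{1\}$ ($1$ an adjoined identity); $s\mid t$ iff $t\in s\tilde S$; $r$ is a least common multiple of $s,t$ if $sS\cap tS=rS$, $s\mid r$, $t\mid r$; every pair has one. For $s\in S$: $F_s=\{x\in S':sx\ne0\}$, $E_s=sS\setminus\{0\}$, $\theta_s:F_s\to E_s$, $x\mapsto sx$. $\mathcal H(S)$ is the inverse semigroup of partial bijections of $S'$ generated by the $\theta_s$; $\mathfrak E(S)=\{X\subseteq S':\mathrm{id}_X\in\mathcal H(S)\}$ (a semilattice under $\cap$ containing all $E_s,F_s$). A character of $\mathfrak E(S)$ is a nonzero map $\varphi:\mathfrak E(S)\to\{0,1\}$ with $\varphi(\emptyset)=0$, $\varphi(X\cap Y)=\varphi(X)\varphi(Y)$; an ultracharacter is a character $\varphi$ such that $\varphi\le\psi$ pointwise for a character $\psi$ forces $\varphi=\psi$. A string is a nonempty $\sigma\subseteq S$ with $0\notin\sigma$, closed under divisors, any two elements having a common multiple in $\sigma$; it is open if $\sigma=\{s\in S:\exists p\in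 S,\ sp\in\sigma\}$. For a string $\sigma$, $\varphi_\sigma(X)=1$ iff for every $s\in\sigma$ there is $t\in\sigma\cap X$ with $s\mid t$ (else $0$); $\sigma$ is quasi-maximal if $\varphi_\sigma$ is an ultracharacter. For a character $\varphi$ let $\sigma_\varphi=\{s\in S:\varphi(E_s)=1\}$; $\varphi$ is open if $\sigma_\varphi$ is a nonempty open string, and $\varphi$ is a ground character if $\sigma_\varphi=\emptyset$. Dual representation: for $s\in S$, $\hat F_s=\{\varphi:\varphi(F_s)=1\}$ and for $\varphi\in\hat F_s$, $\hat\theta_s(\varphi)(X)=\varphi(\{y\in S':sy\in X\})$ for $X\in\mathfrak E(S)$; $\hat F_1$ is the set of all characters and $\hat\theta_1$ is the identity. *)

theory Defs
  imports Main
begin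

text \<open>A semigroup S is represented by a type 'a (S = UNIV) with a multiplication m
and a distinguished zero element z.  Elements of S~ = S \<union> {1} are 'a option,
None standing for the adjoined identity 1.\<close>

definition semigroup_with_zero :: "('a \<Rightarrow> 'a \<Rightarrow> 'a) \<Rightarrow> 'a \<Rightarrow> bool" where
  "semigroup_with_zero m z \<longleftrightarrow>
     (\<forall>x y w. m (m x y) w = m x (m y w)) \<and> (\<forall>x. m z x = z \<and> m x z = z)"

definition zero_left_cancellative :: "('a \<Rightarrow> 'a \<Rightarrow> 'a) \<Rightarrow> 'a \<Rightarrow> bool" where
  "zero_left_cancellative m z \<longleftrightarrow> (\<forall>s t r. m s t = m s r \<and> m s t \<noteq> z \<longrightarrow> t = r)"

text \<open>s divides t iff t \<in> s S~, i.e. t = s or t = s x for some x.\<close>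
definition sdvd :: "('a \<Rightarrow> 'a \<Rightarrow> 'a) \<Rightarrow> 'a \<Rightarrow> 'a \<Rightarrow> bool" where
  "sdvd m s t \<longleftrightarrow> t = s \<or> (\<exists>x. t = m s x)"

definition principal :: "('a \<Rightarrow> 'a \<Rightarrow> 'a) \<Rightarrow> 'a \<Rightarrow> 'a set" where
  "principal m s = range (m s)"

definition admits_lcm :: "('a \<Rightarrow> 'a \<Rightarrow> 'a) \<Rightarrow> bool" where
  "admits_lcm m \<longleftrightarrow> (\<forall>s t. \<exists>r. principal m s \<inter> principal m t = principal m r
                                   \<and> sdvd m s r \<and> sdvd m t r)"

definition Fs :: "('a \<Rightarrow> 'a \<Rightarrow> 'a) \<Rightarrow> 'a \<Rightarrow> 'a \<Rightarrow> 'a set" where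
  "Fs m z s = {x. x \<noteq> z \<and> m s x \<noteq> z}"

definition Es :: "('a \<Rightarrow> 'a \<Rightarrow> 'a) \<Rightarrow> 'a \<Rightarrow> 'a \<Rightarrow> 'a set" where
  "Es m z s = principal m s - {z}"

definition theta :: "('a \<Rightarrow> 'a \<Rightarrow> 'a) \<Rightarrow> 'a \<Rightarrow> 'a \<Rightarrow> ('a \<rightharpoonup> 'a)" where
  "theta m z s = (\<lambda>x. if x \<in> Fs m z s then Some (m s x) else None)"

definition pinv :: "('a \<rightharpoonup> 'a) \<Rightarrow> ('a \<rightharpoonup> 'a)" where
  "pinv f = (\<lambda>y. if \<exists>x. f x = Some y then Some (THE x. f x = Some y) else None)"

inductive_set Hull :: "('a \<Rightarrow> 'a \<Rightarrow> 'a) \<Rightarrow> 'a \<Rightarrow> ('a \<rightharpoonup> 'a) set"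
  for m :: "'a \<Rightarrow> 'a \<Rightarrow> 'a" and z :: 'a where
  gen: "theta m z s \<in> Hull m z"
| inv: "f \<in> Hull m z \<Longrightarrow> pinv f \<in> Hull m z"
| comp: "f \<in> Hull m z \<Longrightarrow> g \<in> Hull m z \<Longrightarrow> f \<circ>\<^sub>m g \<in> Hull m z"

definition pid :: "'a set \<Rightarrow> ('a \<rightharpoonup> 'a)" where
  "pid X = (\<lambda>x. if x \<in> X then Some x else None)"

definition Ecal :: "('a \<Rightarrow> 'a \<Rightarrow> 'a) \<Rightarrow> 'a \<Rightarrow> 'a set set" where
  "Ecal m z = {X. X \<subseteq> - {z} \<and> pid X \<in> Hull m z}"

text \<open>Characters of E(S) are represented as maps 'a set \<Rightarrow> bool which are False
outside E(S) (so that equality and the pointwise order are those on E(S)).\<close>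
definition character :: "('a \<Rightarrow> 'a \<Rightarrow> 'a) \<Rightarrow> 'a \<Rightarrow> ('a set \<Rightarrow> bool) \<Rightarrow> bool" where
  "character m z \<phi> \<longleftrightarrow>
     (\<forall>X. X \<notin> Ecal m z \<longrightarrow> \<not> \<phi> X) \<and>
     (\<exists>X \<in> Ecal m z. \<phi> X) \<and> \<not> \<phi> {} \<and>
     (\<forall>X \<in> Ecal m z. \<forall>Y \<in> Ecal m z. \<phi> (X \<inter> Y) = (\<phi> X \<and> \<phi> Y))"

definition ultracharacter :: "('a \<Rightarrow> 'a \<Rightarrow> 'a) \<Rightarrow> 'a \<Rightarrow> ('a set \<Rightarrow> bool) \<Rightarrow> bool" where
  "ultracharacter m z \<phi> \<longleftrightarrow> character m z \<phi> \<and>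
     (\<forall>\<psi>. character m z \<psi> \<and> (\<forall>X \<in> Ecal m z. \<phi> X \<longrightarrow> \<psi> X) \<longrightarrow> \<phi> = \<psi>)"

definition is_string :: "('a \<Rightarrow> 'a \<Rightarrow> 'a) \<Rightarrow> 'a \<Rightarrow> 'a set \<Rightarrow> bool" where
  "is_string m z \<sigma> \<longleftrightarrow> \<sigma> \<noteq> {} \<and> z \<notin> \<sigma> \<and>
     (\<forall>s t. t \<in> \<sigma> \<and> sdvd m s t \<longrightarrow> s \<in> \<sigma>) \<and>
     (\<forall>s \<in> \<sigma>. \<forall>t \<in> \<sigma>. \<exists>r \<in> \<sigma>. sdvd m s r \<and> sdvd m t r)"

definition open_string :: "('a \<Rightarrow> 'a \<Rightarrow> 'a) \<Rightarrow> 'a set \<Rightarrow> bool" where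
  "open_string m \<sigma> \<longleftrightarrow> \<sigma> = {s. \<exists>p. m s p \<in> \<sigma>}"

definition phi_str :: "('a \<Rightarrow> 'a \<Rightarrow> 'a) \<Rightarrow> 'a \<Rightarrow> 'a set \<Rightarrow> ('a set \<Rightarrow> bool)" where
  "phi_str m z \<sigma> = (\<lambda>X. X \<in> Ecal m z \<and> (\<forall>s \<in> \<sigma>. \<exists>t \<in> \<sigma> \<inter> X. sdvd m s t))"

definition quasi_maximal :: "('a \<Rightarrow> 'a \<Rightarrow> 'a) \<Rightarrow> 'a \<Rightarrow> 'a set \<Rightarrow> bool" where
  "quasi_maximal m z \<sigma> \<longleftrightarrow> ultracharacter m z (phi_str m z \<sigma>)"

definition sigma_char :: "('a \<Rightarrow> 'a \<Rightarrow> 'a) \<Rightarrow> 'a \<Rightarrow> ('a set \<Rightarrow> bool) \<Rightarrow> 'a set" where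
  "sigma_char m z \<phi> = {s. \<phi> (Es m z s)}"

definition open_character :: "('a \<Rightarrow> 'a \<Rightarrow> 'a) \<Rightarrow> 'a \<Rightarrow> ('a set \<Rightarrow> bool) \<Rightarrow> bool" where
  "open_character m z \<phi> \<longleftrightarrow> character m z \<phi> \<and> sigma_char m z \<phi> \<noteq> {} \<and>
     is_string m z (sigma_char m z \<phi>) \<and> open_string m (sigma_char m z \<phi>)"

definition ground_character :: "('a \<Rightarrow> 'a \<Rightarrow> 'a) \<Rightarrow> 'a \<Rightarrow> ('a set \<Rightarrow> bool) \<Rightarrow> bool" where
  "ground_character m z \<phi> \<longleftrightarrow> character m z \<phi> \<and> sigma_char m z \<phi> = {}"

definition hatF :: "('a \<Rightarrow> 'a \<Rightarrow> 'a) \<Rightarrow> 'a \<Rightarrow> 'a option \<Rightarrow> ('a set \<Rightarrow> bool) set" where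
  "hatF m z u = (case u of None \<Rightarrow> {\<phi>. character m z \<phi>}
                 | Some s \<Rightarrow> {\<phi>. character m z \<phi> \<and> \<phi> (Fs m z s)})"

definition hat_theta :: "('a \<Rightarrow> 'a \<Rightarrow> 'a) \<Rightarrow> 'a \<Rightarrow> 'a option \<Rightarrow> ('a set \<Rightarrow> bool) \<Rightarrow> ('a set \<Rightarrow> bool)" where
  "hat_theta m z u \<phi> = (case u of None \<Rightarrow> \<phi>
     | Some s \<Rightarrow> (\<lambda>X. X \<in> Ecal m z \<and> \<phi> {y. y \<noteq> z \<and> m s y \<in> X}))"

end

theory Submission
  imports Defs
begin

text \<open>
  Every element of the inverse semigroup generated by the maps \<open>\<theta>\<^sub>s\<close> acts as
  \<open>b y \<mapsto> a y\<close> on a set of \<open>y\<close> closed under left factors, with \<open>a, b \<in> S\<^sup>~\<close>: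
  the generators and their inverses have this form, and least common multiples keep it stable
  under composition. Hence every \<open>X \<in> \<E>(S)\<close> is a translate \<open>b Y\<close> of such a set, and
  this forces an open character \<open>\<psi>\<close> to lie below \<open>\<phi>\<^sub>\<sigma>\<close> for \<open>\<sigma> = \<sigma>\<^sub>\<psi>\<close>;
  maximality then gives \<open>\<psi> = \<phi>\<^sub>\<sigma>\<close>.
  If \<open>\<sigma>\<^sub>\<psi>\<close> is nonempty but not open, it contains some \<open>s\<close> none of whose
  multiples \<open>s p\<close> lie in it. The dual map \<open>\<hat>\<theta>\<^sub>s\<close> is an order isomorphism between the
  characters that are \<open>1\<close> on \<open>F\<^sub>s\<close> and those that are \<open>1\<close> on \<open>E\<^sub>s\<close>, so it
  preserves ultracharacters, and its inverse carries \<open>\<psi>\<close> to a ground ultracharacter.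
\<close>

lemma pinv_Some_iff:
  assumes inj: "\<And>x x' v. f x = Some v \<Longrightarrow> f x' = Some v \<Longrightarrow> x = x'"
  shows "pinv f v = Some x \<longleftrightarrow> f x = Some v"
proof
  assume fx: "f x = Some v"
  then have "(THE x. f x = Some v) = x"
    using inj by (intro the_equality) blast+
  with fx show "pinv f v = Some x" by (auto simp: pinv_def)
next
  assume "pinv f v = Some x"
  then obtain x' where "f x' = Some v" "x = (THE x. f x = Some v)"
    by (auto simp: pinv_def split: if_splits)
  then show "f x = Some v"
    using theI[of "\<lambda>x. f x = Some v" x'] inj by blast
qed

lemma dom_pinv: "dom (pinv f) = ran f"
  by (auto simp: pinv_def dom_def ran_def)

locale lcm_semigroup =
  fixes m :: "'a \<Rightarrow> 'a \<Rightarrow> 'a" and z :: 'a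
  assumes semigroup: "semigroup_with_zero m z"
    and cancellative: "zero_left_cancellative m z"
    and lcm: "admits_lcm m"
begin

lemma assoc: "m (m x y) w = m x (m y w)"
  using semigroup unfolding semigroup_with_zero_def by blast

lemma zero_left [simp]: "m z x = z" and zero_right [simp]: "m x z = z"
  using semigroup unfolding semigroup_with_zero_def by blast+

lemma cancel: "m s t = m s r \<Longrightarrow> m s t \<noteq> z \<Longrightarrow> t = r"
  using cancellative unfolding zero_left_cancellative_def by blast

lemma lcm_exists:
  obtains r where "principal m s \<inter> principal m t = principal m r" "sdvd m s r" "sdvd m t r"
  using lcm unfolding admits_lcm_def by blast

lemma sdvd_refl: "sdvd m s s"
  by (simp add: sdvd_def)

lemma sdvd_mult: "sdvd m s (m s p)"
  by (auto simp: sdvd_def)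

lemma sdvd_trans: "sdvd m s t \<Longrightarrow> sdvd m t u \<Longrightarrow> sdvd m s u"
  unfolding sdvd_def using assoc by blast

lemma sdvd_mult_right: "sdvd m s r \<Longrightarrow> \<exists>y. m r p = m s y"
  unfolding sdvd_def using assoc by blast

definition tmul :: "'a option \<Rightarrow> 'a \<Rightarrow> 'a" where
  "tmul c y = (case c of None \<Rightarrow> y | Some a \<Rightarrow> m a y)"

definition tprod :: "'a option \<Rightarrow> 'a option \<Rightarrow> 'a option" where
  "tprod c d = (case d of None \<Rightarrow> c | Some b \<Rightarrow> Some (tmul c b))"

lemma tmul_None [simp]: "tmul None y = y" and tmul_Some [simp]: "tmul (Some a) y = m a y"
  by (simp_all add: tmul_def)

lemma tmul_zero [simp]: "tmul c z = z"
  by (cases c) simp_all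

lemma tmul_mult: "tmul c (m y q) = m (tmul c y) q"
  by (cases c) (simp_all add: assoc)

lemma tmul_tprod [simp]: "tmul (tprod c d) y = tmul c (tmul d y)"
  by (cases d) (simp_all add: tprod_def tmul_mult)

lemma tmul_cancel: "tmul c y = tmul c y' \<Longrightarrow> tmul c y \<noteq> z \<Longrightarrow> y = y'"
  by (cases c) (auto intro: cancel)

lemma sdvd_tmul: "sdvd m s r \<Longrightarrow> \<exists>c. \<forall>v. m s (tmul c v) = m r v"
  unfolding sdvd_def by (metis assoc tmul_None tmul_Some)

text \<open>Least common multiples in \<open>S\<^sup>~\<close>, stated for the left multiplications.\<close>

lemma tmul_lcm:
  obtains c d where "\<And>v. tmul a (tmul c v) = tmul b (tmul d v)"
    and "\<And>y w. tmul a y = tmul b w \<Longrightarrow> tmul a y \<noteq> z \<Longrightarrow> \<exists>v. y = tmul c v \<and> w = tmul d v"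
proof (cases a)
  case None
  then show ?thesis by (intro that[of b None]) auto
next
  case a: (Some s)
  show ?thesis
  proof (cases b)
    case None
    with a show ?thesis by (intro that[of None a]) auto
  next
    case b: (Some t)
    obtain r where r: "principal m s \<inter> principal m t = principal m r" "sdvd m s r" "sdvd m t r"
      by (rule lcm_exists)
    obtain c where c: "\<And>v. m s (tmul c v) = m r v" using sdvd_tmul[OF r(2)] by blast
    obtain d where d: "\<And>v. m t (tmul d v) = m r v" using sdvd_tmul[OF r(3)] by blast
    show ?thesis
    proof (rule that[of c d])
      show "tmul a (tmul c v) = tmul b (tmul d v)" for v
        using a b c d by simp
      show "\<exists>v. y = tmul c v \<and> w = tmul d v" if "tmul a y = tmul b w" "tmul a y \<noteq> z" for y w
      proof -
        have eq: "m s y = m t w" and nz: "m s y \<noteq> z" using that a b by simp_all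
        then have "m s y \<in> principal m s \<inter> principal m t" unfolding principal_def by (metis IntI rangeI)
        then have "m s y \<in> principal m r" by (simp only: r(1))
        then obtain v where v: "m s y = m r v" by (auto simp: principal_def)
        have "y = tmul c v" using cancel[of s y] nz v c by metis
        moreover have "w = tmul d v" using cancel[of t w] eq nz v d by metis
        ultimately show ?thesis by blast
      qed
    qed
  qed
qed

definition prefix_closed :: "'a set \<Rightarrow> bool" where
  "prefix_closed Y \<longleftrightarrow> (\<forall>y q. m y q \<in> Y \<longrightarrow> y \<in> Y)"

text \<open>\<open>shift_map a b Y f\<close>: \<open>f\<close> is the restriction of \<open>\<theta>\<^sub>a \<theta>\<^sub>b\<inverse>\<close> to \<open>b Y\<close>.\<close>

definition shift_map :: "'a option \<Rightarrow> 'a option \<Rightarrow> 'a set \<Rightarrow> ('a \<rightharpoonup> 'a) \<Rightarrow> bool" where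
  "shift_map a b Y f \<longleftrightarrow> prefix_closed Y \<and> (\<forall>y\<in>Y. tmul b y \<noteq> z \<and> tmul a y \<noteq> z) \<and>
     (\<forall>x v. f x = Some v \<longleftrightarrow> (\<exists>y\<in>Y. x = tmul b y \<and> v = tmul a y))"

lemma shift_mapD:
  assumes "shift_map a b Y f"
  shows "prefix_closed Y" and "y \<in> Y \<Longrightarrow> tmul b y \<noteq> z" and "y \<in> Y \<Longrightarrow> tmul a y \<noteq> z"
    and "f x = Some v \<longleftrightarrow> (\<exists>y\<in>Y. x = tmul b y \<and> v = tmul a y)"
  using assms unfolding shift_map_def by blast+

lemma shift_map_theta: "shift_map (Some s) None (Fs m z s) (theta m z s)"
proof -
  have "y \<in> Fs m z s" if "m y q \<in> Fs m z s" for y q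
  proof -
    have "m y q \<noteq> z" "m (m s y) q \<noteq> z" using that by (simp_all add: Fs_def assoc)
    then have "y \<noteq> z" "m s y \<noteq> z" by (metis zero_left)+
    then show ?thesis unfolding Fs_def by simp
  qed
  then have "prefix_closed (Fs m z s)"
    unfolding prefix_closed_def by blast
  then show ?thesis
    by (auto simp: shift_map_def theta_def Fs_def)
qed

lemma shift_map_inj:
  assumes "shift_map a b Y f" "f x = Some v" "f x' = Some v"
  shows "x = x'"
proof -
  obtain y y' where "y \<in> Y" "x = tmul b y" "v = tmul a y" "x' = tmul b y'" "v = tmul a y'"
    using assms(2,3) unfolding shift_mapD(4)[OF assms(1)] by meson
  moreover have "tmul a y \<noteq> z" using shift_mapD(3)[OF assms(1) \<open>y \<in> Y\<close>] .
  ultimately show ?thesis using tmul_cancel by metis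
qed

lemma shift_map_pinv:
  assumes "shift_map a b Y f"
  shows "shift_map b a Y (pinv f)"
proof -
  have "pinv f x = Some v \<longleftrightarrow> f v = Some x" for x v
    by (rule pinv_Some_iff) (rule shift_map_inj[OF assms])
  then have "pinv f x = Some v \<longleftrightarrow> (\<exists>y\<in>Y. x = tmul a y \<and> v = tmul b y)" for x v
    using assms unfolding shift_map_def by blast
  then show ?thesis
    using assms unfolding shift_map_def by auto
qed

lemma shift_map_comp:
  assumes f: "shift_map a b Y f" and g: "shift_map a' b' Y' g"
  shows "\<exists>a'' b'' Y''. shift_map a'' b'' Y'' (f \<circ>\<^sub>m g)"
proof -
  obtain c d where cd: "\<And>v. tmul a' (tmul c v) = tmul b (tmul d v)"
    and meet: "\<And>y w. tmul a' y = tmul b w \<Longrightarrow> tmul a' y \<noteq> z \<Longrightarrow> \<exists>v. y = tmul c v \<and> w = tmul d v"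
    using tmul_lcm[of a' b] by blast
  let ?Y = "{v. tmul c v \<in> Y' \<and> tmul d v \<in> Y}"
  have "prefix_closed ?Y"
    using shift_mapD(1)[OF f] shift_mapD(1)[OF g] unfolding prefix_closed_def
    by (metis (mono_tags) mem_Collect_eq tmul_mult)
  moreover have "\<forall>v\<in>?Y. tmul (tprod b' c) v \<noteq> z \<and> tmul (tprod a d) v \<noteq> z"
    using shift_mapD(2)[OF g] shift_mapD(3)[OF f] by simp
  moreover have "(f \<circ>\<^sub>m g) x = Some u \<longleftrightarrow> (\<exists>v\<in>?Y. x = tmul (tprod b' c) v \<and> u = tmul (tprod a d) v)"
    for x u
  proof
    assume "(f \<circ>\<^sub>m g) x = Some u"
    then obtain y w where y: "y \<in> Y'" "x = tmul b' y" and w: "w \<in> Y" "u = tmul a w"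
      and yw: "tmul a' y = tmul b w"
      unfolding map_comp_Some_iff shift_mapD(4)[OF f] shift_mapD(4)[OF g] by blast
    moreover have "tmul a' y \<noteq> z" using shift_mapD(3)[OF g y(1)] .
    ultimately obtain v where "y = tmul c v" "w = tmul d v"
      using meet by blast
    with y w show "\<exists>v\<in>?Y. x = tmul (tprod b' c) v \<and> u = tmul (tprod a d) v"
      by auto
  next
    assume "\<exists>v\<in>?Y. x = tmul (tprod b' c) v \<and> u = tmul (tprod a d) v"
    then show "(f \<circ>\<^sub>m g) x = Some u"
      unfolding map_comp_Some_iff shift_mapD(4)[OF f] shift_mapD(4)[OF g] using cd by force
  qed
  ultimately show ?thesis
    unfolding shift_map_def by blast
qed

lemma Hull_shift_map: "f \<in> Hull m z \<Longrightarrow> \<exists>a b Y. shift_map a b Y f"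
  by (induction rule: Hull.induct) (use shift_map_theta shift_map_pinv shift_map_comp in blast)+

lemma Hull_inj: "f \<in> Hull m z \<Longrightarrow> f x = Some v \<Longrightarrow> f x' = Some v \<Longrightarrow> x = x'"
  using Hull_shift_map shift_map_inj by blast

lemma Hull_zero: "f \<in> Hull m z \<Longrightarrow> f z = None"
  using Hull_shift_map shift_mapD(2,4) by (metis not_None_eq tmul_zero)

lemma dom_Hull_Ecal:
  assumes "f \<in> Hull m z"
  shows "dom f \<in> Ecal m z"
proof -
  have "pid (dom f) = pinv f \<circ>\<^sub>m f"
  proof
    fix x
    show "pid (dom f) x = (pinv f \<circ>\<^sub>m f) x"
    proof (cases "f x")
      case None
      then show ?thesis by (simp add: pid_def dom_def)
    next
      case (Some v)
      moreover have "pinv f v = Some x"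
        using pinv_Some_iff[of f v x] Hull_inj[OF assms] Some by blast
      ultimately show ?thesis by (simp add: pid_def dom_def)
    qed
  qed
  moreover have "pinv f \<circ>\<^sub>m f \<in> Hull m z"
    using assms by (simp add: Hull.comp Hull.inv)
  moreover have "z \<notin> dom f"
    using Hull_zero[OF assms] by blast
  ultimately show ?thesis
    unfolding Ecal_def by auto
qed

lemma Ecal_zero: "X \<in> Ecal m z \<Longrightarrow> z \<notin> X"
  by (auto simp: Ecal_def)

lemma Ecal_Int:
  assumes "X \<in> Ecal m z" "Y \<in> Ecal m z"
  shows "X \<inter> Y \<in> Ecal m z"
proof -
  have "pid (X \<inter> Y) = pid X \<circ>\<^sub>m pid Y"
    by (auto simp: pid_def map_comp_def)
  with assms show ?thesis
    unfolding Ecal_def by (auto intro: Hull.comp)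
qed

lemma Fs_Ecal: "Fs m z s \<in> Ecal m z"
proof -
  have "dom (theta m z s) = Fs m z s"
    by (simp add: theta_def dom_def)
  with dom_Hull_Ecal[OF Hull.gen] show ?thesis
    by metis
qed

lemma Ecal_shape:
  assumes "X \<in> Ecal m z"
  obtains b where "X \<subseteq> range (tmul b)" and "\<And>y q. tmul b (m y q) \<in> X \<Longrightarrow> tmul b y \<in> X"
proof -
  obtain a b Y where sm: "shift_map a b Y (pid X)"
    using assms Hull_shift_map unfolding Ecal_def by blast
  have X: "x \<in> X \<longleftrightarrow> (\<exists>y\<in>Y. x = tmul b y)" for x
  proof -
    have "x \<in> X \<longleftrightarrow> (\<exists>v. pid X x = Some v)"
      by (simp add: pid_def)
    also have "\<dots> \<longleftrightarrow> (\<exists>y\<in>Y. x = tmul b y)"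
      unfolding shift_mapD(4)[OF sm] by blast
    finally show ?thesis .
  qed
  show thesis
  proof (rule that[of b])
    show "X \<subseteq> range (tmul b)"
    proof
      fix x assume "x \<in> X"
      then obtain y where "x = tmul b y" using X[THEN iffD1] by blast
      then show "x \<in> range (tmul b)" by simp
    qed
    show "tmul b y \<in> X" if yq: "tmul b (m y q) \<in> X" for y q
    proof -
      obtain y' where "y' \<in> Y" "tmul b (m y q) = tmul b y'"
        using X[THEN iffD1, OF yq] by blast
      moreover have "tmul b y' \<noteq> z" using shift_mapD(2)[OF sm] \<open>y' \<in> Y\<close> .
      ultimately have "m y q \<in> Y"
        using tmul_cancel[of b "m y q" y'] by simp
      then show ?thesis
        using shift_mapD(1)[OF sm] X[THEN iffD2] unfolding prefix_closed_def by blast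
    qed
  qed
qed

definition theta_pre :: "'a \<Rightarrow> 'a set \<Rightarrow> 'a set" where
  "theta_pre s X = {y. y \<noteq> z \<and> m s y \<in> X}"

definition theta_img :: "'a \<Rightarrow> 'a set \<Rightarrow> 'a set" where
  "theta_img s Y = m s ` (Y \<inter> Fs m z s)"

lemma theta_pre_Ecal:
  assumes "X \<in> Ecal m z"
  shows "theta_pre s X \<in> Ecal m z"
proof -
  have "dom (pid X \<circ>\<^sub>m theta m z s) = theta_pre s X"
    using Ecal_zero[OF assms]
    by (auto simp: dom_def map_comp_def pid_def theta_def Fs_def theta_pre_def split: if_splits)
  moreover have "pid X \<circ>\<^sub>m theta m z s \<in> Hull m z"
    using assms unfolding Ecal_def by (simp add: Hull.comp Hull.gen)
  ultimately show ?thesis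
    using dom_Hull_Ecal by metis
qed

lemma theta_img_Ecal:
  assumes "Y \<in> Ecal m z"
  shows "theta_img s Y \<in> Ecal m z"
proof -
  have "dom (pinv (theta m z s \<circ>\<^sub>m pid Y)) = theta_img s Y"
    unfolding dom_pinv
    by (auto simp: ran_def map_comp_def pid_def theta_def theta_img_def split: if_splits)
  moreover have "pinv (theta m z s \<circ>\<^sub>m pid Y) \<in> Hull m z"
    using assms unfolding Ecal_def by (simp add: Hull.inv Hull.comp Hull.gen)
  ultimately show ?thesis
    using dom_Hull_Ecal by metis
qed

lemma theta_pre_Int: "theta_pre s (X \<inter> Y) = theta_pre s X \<inter> theta_pre s Y"
  by (auto simp: theta_pre_def)

lemma theta_img_Int: "theta_img s (X \<inter> Y) = theta_img s X \<inter> theta_img s Y"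
  unfolding theta_img_def Fs_def by (auto dest: cancel)

lemma theta_pre_img: "theta_pre s (theta_img s Y) = Y \<inter> Fs m z s"
  unfolding theta_pre_def theta_img_def Fs_def by auto (metis cancel)

lemma theta_img_pre: "z \<notin> X \<Longrightarrow> theta_img s (theta_pre s X) = X \<inter> Es m z s"
  unfolding theta_pre_def theta_img_def Fs_def Es_def principal_def by force

lemma theta_pre_Es: "theta_pre s (Es m z s) = Fs m z s"
  unfolding theta_pre_def Es_def Fs_def principal_def by blast

lemma theta_img_Fs: "theta_img s (Fs m z s) = Es m z s"
  using theta_img_pre[of "Es m z s" s] theta_pre_Es by (simp add: Es_def)

lemma Es_Ecal: "Es m z s \<in> Ecal m z"
  using theta_img_Ecal[OF Fs_Ecal] theta_img_Fs by metis

lemma theta_img_Es: "theta_img s (Es m z p) = Es m z (m s p)"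
proof (intro equalityI subsetI)
  fix v assume "v \<in> theta_img s (Es m z p)"
  then show "v \<in> Es m z (m s p)"
    unfolding theta_img_def Es_def Fs_def principal_def by (auto simp: assoc)
next
  fix v assume "v \<in> Es m z (m s p)"
  then obtain q where "v = m s (m p q)" "v \<noteq> z"
    unfolding Es_def principal_def by (auto simp: assoc)
  moreover then have "m p q \<noteq> z" by (metis zero_right)
  ultimately show "v \<in> theta_img s (Es m z p)"
    unfolding theta_img_def Es_def Fs_def principal_def by auto
qed

lemma theta_pre_Es_mult: "theta_pre s (Es m z (m s p)) \<subseteq> Es m z p"
  unfolding theta_pre_def Es_def principal_def by (auto simp: assoc dest: cancel)

lemma Es_zero: "Es m z z = {}"
  by (auto simp: Es_def principal_def)

lemma Es_antimono: "sdvd m s t \<Longrightarrow> Es m z t \<subseteq> Es m z s"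
  unfolding sdvd_def Es_def principal_def by (auto simp: assoc)

lemma Es_Int: "principal m s \<inter> principal m t = principal m r \<Longrightarrow> Es m z s \<inter> Es m z t = Es m z r"
  unfolding Es_def by blast

lemma character_Ecal: "character m z \<phi> \<Longrightarrow> \<phi> X \<Longrightarrow> X \<in> Ecal m z"
  unfolding character_def by blast

lemma character_empty: "character m z \<phi> \<Longrightarrow> \<not> \<phi> {}"
  unfolding character_def by blast

lemma character_Int:
  "character m z \<phi> \<Longrightarrow> X \<in> Ecal m z \<Longrightarrow> Y \<in> Ecal m z \<Longrightarrow> \<phi> (X \<inter> Y) \<longleftrightarrow> \<phi> X \<and> \<phi> Y"
  unfolding character_def by blast

lemma character_mono:
  assumes "character m z \<phi>" "\<phi> X" "Y \<in> Ecal m z" "X \<subseteq> Y"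
  shows "\<phi> Y"
proof -
  have "X \<inter> Y = X" using assms(4) by blast
  then show ?thesis
    using character_Int[OF assms(1) character_Ecal[OF assms(1,2)] assms(3)] assms(2) by simp
qed

lemma ultracharacter_eq:
  "ultracharacter m z \<phi> \<Longrightarrow> character m z \<psi> \<Longrightarrow> \<forall>X\<in>Ecal m z. \<phi> X \<longrightarrow> \<psi> X \<Longrightarrow> \<phi> = \<psi>"
  unfolding ultracharacter_def by blast

lemma ultracharacter_transfer:
  assumes "ultracharacter m z \<chi>" "character m z (H \<chi>)"
    and "\<And>\<psi>. character m z \<psi> \<Longrightarrow> \<forall>X\<in>Ecal m z. H \<chi> X \<longrightarrow> \<psi> X \<Longrightarrow>
           character m z (B \<psi>) \<and> (\<forall>X\<in>Ecal m z. \<chi> X \<longrightarrow> B \<psi> X) \<and> H (B \<psi>) = \<psi>"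
  shows "ultracharacter m z (H \<chi>)"
  unfolding ultracharacter_def
  using assms ultracharacter_eq[OF assms(1)] by metis

lemma character_comap:
  assumes "character m z \<phi>"
    and "\<And>X. X \<in> Ecal m z \<Longrightarrow> T X \<in> Ecal m z" "\<And>X Y. T (X \<inter> Y) = T X \<inter> T Y" "T {} = {}"
    and "X\<^sub>0 \<in> Ecal m z" "\<phi> (T X\<^sub>0)"
  shows "character m z (\<lambda>X. X \<in> Ecal m z \<and> \<phi> (T X))"
  unfolding character_def
  using assms character_empty[OF assms(1)] character_Int[OF assms(1)] Ecal_Int by auto

lemma hat_theta_Some: "hat_theta m z (Some s) \<chi> = (\<lambda>X. X \<in> Ecal m z \<and> \<chi> (theta_pre s X))"
  by (simp add: hat_theta_def theta_pre_def)

definition hat_theta_inv :: "'a \<Rightarrow> ('a set \<Rightarrow> bool) \<Rightarrow> ('a set \<Rightarrow> bool)" where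
  "hat_theta_inv s \<psi> = (\<lambda>Y. Y \<in> Ecal m z \<and> \<psi> (theta_img s Y))"

lemma hat_theta_character:
  assumes "character m z \<chi>" "\<chi> (Fs m z s)"
  shows "character m z (hat_theta m z (Some s) \<chi>)"
  unfolding hat_theta_Some
  using assms theta_pre_Ecal theta_pre_Int Es_Ecal theta_pre_Es
  by (intro character_comap[of _ _ "Es m z s"]) (auto simp: theta_pre_def)

lemma hat_theta_inv_character:
  assumes "character m z \<psi>" "\<psi> (Es m z s)"
  shows "character m z (hat_theta_inv s \<psi>)"
  unfolding hat_theta_inv_def
  using assms theta_img_Ecal theta_img_Int Fs_Ecal theta_img_Fs
  by (intro character_comap[of _ _ "Fs m z s"]) (auto simp: theta_img_def)

lemma hat_theta_inv_hat:
  assumes "character m z \<chi>" "\<chi> (Fs m z s)"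
  shows "hat_theta_inv s (hat_theta m z (Some s) \<chi>) = \<chi>"
proof
  fix X
  show "hat_theta_inv s (hat_theta m z (Some s) \<chi>) X = \<chi> X"
  proof (cases "X \<in> Ecal m z")
    case True
    then have "\<chi> (X \<inter> Fs m z s) = \<chi> X"
      using character_Int[OF assms(1) True Fs_Ecal] assms(2) by blast
    then show ?thesis
      using True theta_img_Ecal[OF True]
      by (simp add: hat_theta_inv_def hat_theta_Some theta_pre_img)
  next
    case False
    then show ?thesis
      using character_Ecal[OF assms(1)] by (auto simp: hat_theta_inv_def)
  qed
qed

lemma hat_hat_theta_inv:
  assumes "character m z \<psi>" "\<psi> (Es m z s)"
  shows "hat_theta m z (Some s) (hat_theta_inv s \<psi>) = \<psi>"
proof
  fix X
  show "hat_theta m z (Some s) (hat_theta_inv s \<psi>) X = \<psi> X"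
  proof (cases "X \<in> Ecal m z")
    case True
    then have "\<psi> (X \<inter> Es m z s) = \<psi> X"
      using character_Int[OF assms(1) True Es_Ecal] assms(2) by blast
    then show ?thesis
      using True theta_pre_Ecal[OF True] Ecal_zero[OF True]
      by (simp add: hat_theta_inv_def hat_theta_Some theta_img_pre)
  next
    case False
    then show ?thesis
      using character_Ecal[OF assms(1)] by (auto simp: hat_theta_Some)
  qed
qed

lemma hat_theta_ultracharacter:
  assumes "ultracharacter m z \<chi>" "\<chi> (Fs m z s)"
  shows "ultracharacter m z (hat_theta m z (Some s) \<chi>)"
proof (rule ultracharacter_transfer[OF assms(1), where B = "hat_theta_inv s"])
  have \<chi>: "character m z \<chi>" using assms(1) by (simp add: ultracharacter_def)
  show "character m z (hat_theta m z (Some s) \<chi>)"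
    using hat_theta_character[OF \<chi> assms(2)] .
  fix \<psi> assume \<psi>: "character m z \<psi>" and le: "\<forall>X\<in>Ecal m z. hat_theta m z (Some s) \<chi> X \<longrightarrow> \<psi> X"
  have "\<psi> (Es m z s)"
    using le Es_Ecal assms(2) by (simp add: hat_theta_Some theta_pre_Es)
  moreover have "\<forall>X\<in>Ecal m z. \<chi> X \<longrightarrow> hat_theta_inv s \<psi> X"
    using le hat_theta_inv_hat[OF \<chi> assms(2)] theta_img_Ecal
    by (auto simp: hat_theta_inv_def fun_eq_iff)
  ultimately show "character m z (hat_theta_inv s \<psi>) \<and> (\<forall>X\<in>Ecal m z. \<chi> X \<longrightarrow> hat_theta_inv s \<psi> X)
      \<and> hat_theta m z (Some s) (hat_theta_inv s \<psi>) = \<psi>"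
    using hat_theta_inv_character[OF \<psi>] hat_hat_theta_inv[OF \<psi>] by blast
qed

lemma hat_theta_inv_ultracharacter:
  assumes "ultracharacter m z \<psi>" "\<psi> (Es m z s)"
  shows "ultracharacter m z (hat_theta_inv s \<psi>)"
proof (rule ultracharacter_transfer[OF assms(1), where B = "hat_theta m z (Some s)"])
  have \<psi>: "character m z \<psi>" using assms(1) by (simp add: ultracharacter_def)
  show "character m z (hat_theta_inv s \<psi>)"
    using hat_theta_inv_character[OF \<psi> assms(2)] .
  fix \<chi> assume \<chi>: "character m z \<chi>" and le: "\<forall>X\<in>Ecal m z. hat_theta_inv s \<psi> X \<longrightarrow> \<chi> X"
  have "\<chi> (Fs m z s)"
    using le Fs_Ecal assms(2) by (simp add: hat_theta_inv_def theta_img_Fs)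
  moreover have "\<forall>X\<in>Ecal m z. \<psi> X \<longrightarrow> hat_theta m z (Some s) \<chi> X"
    using le hat_hat_theta_inv[OF \<psi> assms(2)] theta_pre_Ecal
    by (auto simp: hat_theta_Some fun_eq_iff)
  ultimately show "character m z (hat_theta m z (Some s) \<chi>) \<and> (\<forall>X\<in>Ecal m z. \<psi> X \<longrightarrow> hat_theta m z (Some s) \<chi> X)
      \<and> hat_theta_inv s (hat_theta m z (Some s) \<chi>) = \<chi>"
    using hat_theta_character[OF \<chi>] hat_theta_inv_hat[OF \<chi>] by blast
qed

lemma string_dvd_closed: "is_string m z \<sigma> \<Longrightarrow> t \<in> \<sigma> \<Longrightarrow> sdvd m s t \<Longrightarrow> s \<in> \<sigma>"
  unfolding is_string_def by blast

lemma string_directed: "is_string m z \<sigma> \<Longrightarrow> s \<in> \<sigma> \<Longrightarrow> t \<in> \<sigma> \<Longrightarrow> \<exists>r\<in>\<sigma>. sdvd m s r \<and> sdvd m t r"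
  unfolding is_string_def by blast

lemma open_stringD: "open_string m \<sigma> \<Longrightarrow> s \<in> \<sigma> \<Longrightarrow> \<exists>p. m s p \<in> \<sigma>"
  unfolding open_string_def by blast

lemma open_stringI: "is_string m z \<sigma> \<Longrightarrow> \<forall>s\<in>\<sigma>. \<exists>p. m s p \<in> \<sigma> \<Longrightarrow> open_string m \<sigma>"
  unfolding open_string_def using string_dvd_closed sdvd_mult by blast

lemma sigma_char_string:
  assumes "character m z \<phi>" "sigma_char m z \<phi> \<noteq> {}"
  shows "is_string m z (sigma_char m z \<phi>)"
  unfolding is_string_def
proof (intro conjI allI impI ballI)
  show "sigma_char m z \<phi> \<noteq> {}" by fact
  show "z \<notin> sigma_char m z \<phi>"
    using character_empty[OF assms(1)] by (simp add: sigma_char_def Es_zero)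
  show "s \<in> sigma_char m z \<phi>" if "t \<in> sigma_char m z \<phi> \<and> sdvd m s t" for s t
    using that character_mono[OF assms(1) _ Es_Ecal Es_antimono] unfolding sigma_char_def by blast
  show "\<exists>r\<in>sigma_char m z \<phi>. sdvd m s r \<and> sdvd m t r"
    if "s \<in> sigma_char m z \<phi>" "t \<in> sigma_char m z \<phi>" for s t
  proof -
    obtain r where r: "principal m s \<inter> principal m t = principal m r" "sdvd m s r" "sdvd m t r"
      by (rule lcm_exists)
    have "\<phi> (Es m z s \<inter> Es m z t)"
      using that character_Int[OF assms(1) Es_Ecal Es_Ecal] by (simp add: sigma_char_def)
    then have "r \<in> sigma_char m z \<phi>"
      by (simp add: sigma_char_def Es_Int[OF r(1)])
    with r show ?thesis by blast
  qed
qed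

lemma sigma_char_phi_str:
  assumes "is_string m z \<sigma>" "open_string m \<sigma>"
  shows "sigma_char m z (phi_str m z \<sigma>) = \<sigma>"
proof (intro equalityI subsetI)
  fix s assume "s \<in> sigma_char m z (phi_str m z \<sigma>)"
  then have cof: "\<forall>t\<in>\<sigma>. \<exists>r\<in>\<sigma> \<inter> Es m z s. sdvd m t r"
    unfolding sigma_char_def phi_str_def by blast
  obtain t where "t \<in> \<sigma>" using assms(1) unfolding is_string_def by blast
  then obtain r where "r \<in> \<sigma>" "r \<in> Es m z s" using cof by blast
  then show "s \<in> \<sigma>"
    using string_dvd_closed[OF assms(1)] unfolding Es_def principal_def sdvd_def by blast
next
  fix s assume s: "s \<in> \<sigma>"
  have "\<exists>r\<in>\<sigma> \<inter> Es m z s. sdvd m t r" if t: "t \<in> \<sigma>" for t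
  proof -
    obtain r where r: "r \<in> \<sigma>" "sdvd m s r" "sdvd m t r"
      using string_directed[OF assms(1) s t] by blast
    obtain p where p: "m r p \<in> \<sigma>" using open_stringD[OF assms(2) r(1)] by blast
    obtain y where "m r p = m s y" using sdvd_mult_right[OF r(2)] by blast
    then have "m r p \<in> Es m z s"
      using p assms(1) unfolding is_string_def Es_def principal_def by auto
    with p sdvd_trans[OF r(3) sdvd_mult] show ?thesis by blast
  qed
  then show "s \<in> sigma_char m z (phi_str m z \<sigma>)"
    unfolding sigma_char_def phi_str_def using Es_Ecal by blast
qed

lemma open_string_tail:
  assumes "is_string m z \<sigma>" "open_string m \<sigma>" "set_option b \<subseteq> \<sigma>" "s \<in> \<sigma>"
  obtains r where "r \<in> \<sigma>" "sdvd m s r" "\<And>t. sdvd m r t \<Longrightarrow> \<exists>y. t = tmul b y"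
proof (cases b)
  case None
  then show ?thesis using that[OF assms(4) sdvd_refl] by simp
next
  case (Some a)
  then obtain r where r: "r \<in> \<sigma>" "sdvd m s r" "sdvd m a r"
    using string_directed[OF assms(1,4)] assms(3) by auto
  obtain p where p: "m r p \<in> \<sigma>" using open_stringD[OF assms(2) r(1)] by blast
  obtain y where y: "m r p = m a y" using sdvd_mult_right[OF r(3)] by blast
  have "\<exists>y. t = tmul b y" if "sdvd m (m r p) t" for t
    using that y Some unfolding sdvd_def by (auto simp: assoc)
  with p sdvd_trans[OF r(2) sdvd_mult] show ?thesis using that by blast
qed

lemma phi_str_eventually:
  assumes "is_string m z \<sigma>" "open_string m \<sigma>" "phi_str m z \<sigma> X"
  shows "\<exists>r\<in>\<sigma>. \<forall>t\<in>\<sigma>. sdvd m r t \<longrightarrow> t \<in> X"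
proof -
  have X: "X \<in> Ecal m z" and cof: "\<forall>s\<in>\<sigma>. \<exists>t\<in>\<sigma> \<inter> X. sdvd m s t"
    using assms(3) unfolding phi_str_def by blast+
  obtain b where b: "X \<subseteq> range (tmul b)" "\<And>y q. tmul b (m y q) \<in> X \<Longrightarrow> tmul b y \<in> X"
    using Ecal_shape[OF X] by blast
  obtain t\<^sub>0 where t\<^sub>0: "t\<^sub>0 \<in> \<sigma>" using assms(1) unfolding is_string_def by blast
  have "set_option b \<subseteq> \<sigma>"
  proof
    fix a assume a: "a \<in> set_option b"
    obtain t where "t \<in> \<sigma>" "t \<in> X" using cof t\<^sub>0 by blast
    moreover from this have "sdvd m a t" using a b(1) unfolding sdvd_def by auto
    ultimately show "a \<in> \<sigma>" using string_dvd_closed[OF assms(1)] by blast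
  qed
  then obtain r where r: "r \<in> \<sigma>" "\<And>t. sdvd m r t \<Longrightarrow> \<exists>y. t = tmul b y"
    using open_string_tail[OF assms(1,2) _ t\<^sub>0] by metis
  have "t \<in> X" if t: "t \<in> \<sigma>" "sdvd m r t" for t
  proof -
    obtain y where y: "t = tmul b y" using r(2) t(2) by blast
    obtain t' where "t' \<in> X" "sdvd m t t'" using cof t(1) by blast
    then show "t \<in> X"
      using b(2) y unfolding sdvd_def by (auto simp: tmul_mult)
  qed
  with r(1) show ?thesis by blast
qed

lemma phi_str_character:
  assumes "is_string m z \<sigma>" "open_string m \<sigma>"
  shows "character m z (phi_str m z \<sigma>)"
  unfolding character_def
proof (intro conjI ballI allI impI)
  obtain t where t: "t \<in> \<sigma>" using assms(1) unfolding is_string_def by blast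
  then have "phi_str m z \<sigma> (Es m z t)"
    using sigma_char_phi_str[OF assms] unfolding sigma_char_def by blast
  then show "\<exists>X\<in>Ecal m z. phi_str m z \<sigma> X" using Es_Ecal by blast
  show "\<not> phi_str m z \<sigma> {}" using t unfolding phi_str_def by blast
  show "\<not> phi_str m z \<sigma> X" if "X \<notin> Ecal m z" for X
    using that unfolding phi_str_def by blast
  show "phi_str m z \<sigma> (X \<inter> Y) \<longleftrightarrow> phi_str m z \<sigma> X \<and> phi_str m z \<sigma> Y"
    if XY: "X \<in> Ecal m z" "Y \<in> Ecal m z" for X Y
  proof
    assume "phi_str m z \<sigma> (X \<inter> Y)"
    then show "phi_str m z \<sigma> X \<and> phi_str m z \<sigma> Y"
      using XY unfolding phi_str_def by blast
  next
    assume "phi_str m z \<sigma> X \<and> phi_str m z \<sigma> Y"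
    then obtain r\<^sub>X r\<^sub>Y where
      r\<^sub>X: "r\<^sub>X \<in> \<sigma>" "\<forall>t\<in>\<sigma>. sdvd m r\<^sub>X t \<longrightarrow> t \<in> X" and
      r\<^sub>Y: "r\<^sub>Y \<in> \<sigma>" "\<forall>t\<in>\<sigma>. sdvd m r\<^sub>Y t \<longrightarrow> t \<in> Y"
      using phi_str_eventually[OF assms] by meson
    obtain r where r: "r \<in> \<sigma>" "sdvd m r\<^sub>X r" "sdvd m r\<^sub>Y r"
      using string_directed[OF assms(1) r\<^sub>X(1) r\<^sub>Y(1)] by blast
    have "\<exists>t\<in>\<sigma> \<inter> (X \<inter> Y). sdvd m s t" if s: "s \<in> \<sigma>" for s
    proof -
      obtain t where "t \<in> \<sigma>" "sdvd m s t" "sdvd m r t"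
        using string_directed[OF assms(1) s r(1)] by blast
      then show ?thesis
        using r\<^sub>X(2) r\<^sub>Y(2) sdvd_trans[OF r(2)] sdvd_trans[OF r(3)] by blast
    qed
    then show "phi_str m z \<sigma> (X \<inter> Y)"
      unfolding phi_str_def using Ecal_Int[OF XY] by blast
  qed
qed

lemma open_character_le_phi_str:
  assumes "open_character m z \<psi>" "\<psi> X"
  shows "phi_str m z (sigma_char m z \<psi>) X"
proof -
  let ?\<sigma> = "sigma_char m z \<psi>"
  have \<psi>: "character m z \<psi>" and \<sigma>: "is_string m z ?\<sigma>" "open_string m ?\<sigma>"
    using assms(1) unfolding open_character_def by blast+
  have X: "X \<in> Ecal m z" using character_Ecal[OF \<psi> assms(2)] .
  obtain b where b: "X \<subseteq> range (tmul b)" "\<And>y q. tmul b (m y q) \<in> X \<Longrightarrow> tmul b y \<in> X"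
    using Ecal_shape[OF X] by blast
  have "set_option b \<subseteq> ?\<sigma>"
  proof
    fix a assume "a \<in> set_option b"
    then have "X \<subseteq> Es m z a"
      using b(1) Ecal_zero[OF X] unfolding Es_def principal_def by auto
    then show "a \<in> ?\<sigma>"
      using character_mono[OF \<psi> assms(2) Es_Ecal] by (simp add: sigma_char_def)
  qed
  have "\<exists>t\<in>?\<sigma> \<inter> X. sdvd m s t" if s: "s \<in> ?\<sigma>" for s
  proof -
    obtain r where r: "r \<in> ?\<sigma>" "sdvd m s r" "\<And>t. sdvd m r t \<Longrightarrow> \<exists>y. t = tmul b y"
      using open_string_tail[OF \<sigma> \<open>set_option b \<subseteq> ?\<sigma>\<close> s] by metis
    have "\<psi> (X \<inter> Es m z r)"
      using character_Int[OF \<psi> X Es_Ecal] assms(2) r(1) by (simp add: sigma_char_def)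
    then have "X \<inter> Es m z r \<noteq> {}"
      using character_empty[OF \<psi>] by force
    then obtain q where "m r q \<in> X"
      unfolding Es_def principal_def by blast
    moreover obtain y where "r = tmul b y" using r(3)[OF sdvd_refl] by blast
    ultimately have "r \<in> X" using b(2) by (simp add: tmul_mult)
    with r show ?thesis by blast
  qed
  with X show ?thesis
    unfolding phi_str_def by blast
qed

lemma open_ultracharacters:
  "{\<phi>. ultracharacter m z \<phi> \<and> open_character m z \<phi>}
     = {phi_str m z \<sigma> | \<sigma>. is_string m z \<sigma> \<and> open_string m \<sigma> \<and> quasi_maximal m z \<sigma>}"
proof (intro equalityI subsetI)
  fix \<phi> assume "\<phi> \<in> {\<phi>. ultracharacter m z \<phi> \<and> open_character m z \<phi>}"
  then have u: "ultracharacter m z \<phi>" and o: "open_character m z \<phi>" by auto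
  let ?\<sigma> = "sigma_char m z \<phi>"
  have \<sigma>: "is_string m z ?\<sigma>" "open_string m ?\<sigma>"
    using o unfolding open_character_def by auto
  have "\<phi> = phi_str m z ?\<sigma>"
    using ultracharacter_eq[OF u phi_str_character[OF \<sigma>]] open_character_le_phi_str[OF o] by blast
  with u \<sigma> show "\<phi> \<in> {phi_str m z \<sigma> | \<sigma>. is_string m z \<sigma> \<and> open_string m \<sigma> \<and> quasi_maximal m z \<sigma>}"
    unfolding quasi_maximal_def by auto
next
  fix \<phi> assume "\<phi> \<in> {phi_str m z \<sigma> | \<sigma>. is_string m z \<sigma> \<and> open_string m \<sigma> \<and> quasi_maximal m z \<sigma>}"
  then obtain \<sigma> where \<phi>: "\<phi> = phi_str m z \<sigma>" "ultracharacter m z \<phi>"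
    and \<sigma>: "is_string m z \<sigma>" "open_string m \<sigma>"
    unfolding quasi_maximal_def by blast
  moreover have "sigma_char m z \<phi> = \<sigma>" "\<sigma> \<noteq> {}"
    using sigma_char_phi_str[OF \<sigma>] \<phi>(1) \<sigma>(1) unfolding is_string_def by simp_all
  ultimately show "\<phi> \<in> {\<phi>. ultracharacter m z \<phi> \<and> open_character m z \<phi>}"
    unfolding open_character_def ultracharacter_def by simp
qed

lemma sigma_char_hat_theta_inv: "sigma_char m z (hat_theta_inv s \<psi>) = {p. m s p \<in> sigma_char m z \<psi>}"
  by (simp add: sigma_char_def hat_theta_inv_def theta_img_Es Es_Ecal)

lemma sigma_char_hat_theta:
  assumes "character m z \<phi>" "m s p \<in> sigma_char m z (hat_theta m z (Some s) \<phi>)"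
  shows "p \<in> sigma_char m z \<phi>"
  using character_mono[OF assms(1) _ Es_Ecal theta_pre_Es_mult] assms(2)
  unfolding sigma_char_def hat_theta_Some by blast

lemma non_open_character_obtains_maximal:
  assumes "character m z \<psi>" "sigma_char m z \<psi> \<noteq> {}" "\<not> open_character m z \<psi>"
  obtains s where "s \<in> sigma_char m z \<psi>" "\<And>p. m s p \<notin> sigma_char m z \<psi>"
  using assms sigma_char_string open_stringI unfolding open_character_def by blast

lemma non_open_ultracharacters:
  "{\<phi>. ultracharacter m z \<phi> \<and> \<not> open_character m z \<phi>}
     = {hat_theta m z u \<phi> | u \<phi>. ground_character m z \<phi> \<and> ultracharacter m z \<phi> \<and> \<phi> \<in> hatF m z u}"
proof (intro equalityI subsetI)
  fix \<psi> assume "\<psi> \<in> {\<phi>. ultracharacter m z \<phi> \<and> \<not> open_character m z \<phi>}"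
  then have u: "ultracharacter m z \<psi>" and no: "\<not> open_character m z \<psi>" by auto
  then have \<psi>: "character m z \<psi>" by (simp add: ultracharacter_def)
  show "\<psi> \<in> {hat_theta m z u \<phi> | u \<phi>. ground_character m z \<phi> \<and> ultracharacter m z \<phi> \<and> \<phi> \<in> hatF m z u}"
  proof (cases "sigma_char m z \<psi> = {}")
    case True
    with u \<psi> have "\<psi> = hat_theta m z None \<psi> \<and> ground_character m z \<psi> \<and> ultracharacter m z \<psi>
        \<and> \<psi> \<in> hatF m z None"
      by (simp add: hat_theta_def ground_character_def hatF_def)
    then show ?thesis by blast
  next
    case False
    then obtain s where s: "s \<in> sigma_char m z \<psi>" "\<And>p. m s p \<notin> sigma_char m z \<psi>"
      using non_open_character_obtains_maximal[OF \<psi> _ no] by blast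
    let ?\<phi> = "hat_theta_inv s \<psi>"
    have Es: "\<psi> (Es m z s)" using s(1) by (simp add: sigma_char_def)
    have "ground_character m z ?\<phi>"
      using hat_theta_inv_character[OF \<psi> Es] s(2)
      by (simp add: ground_character_def sigma_char_hat_theta_inv)
    moreover have "?\<phi> \<in> hatF m z (Some s)"
      using hat_theta_inv_character[OF \<psi> Es] Es Fs_Ecal
      by (simp add: hatF_def hat_theta_inv_def theta_img_Fs)
    ultimately have "\<psi> = hat_theta m z (Some s) ?\<phi> \<and> ground_character m z ?\<phi>
        \<and> ultracharacter m z ?\<phi> \<and> ?\<phi> \<in> hatF m z (Some s)"
      using hat_hat_theta_inv[OF \<psi> Es] hat_theta_inv_ultracharacter[OF u Es] by simp
    then show ?thesis by blast
  qed
next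
  fix \<psi> assume "\<psi> \<in> {hat_theta m z u \<phi> | u \<phi>. ground_character m z \<phi> \<and> ultracharacter m z \<phi> \<and> \<phi> \<in> hatF m z u}"
  then obtain u \<phi> where \<psi>: "\<psi> = hat_theta m z u \<phi>" and \<phi>: "ultracharacter m z \<phi>" "\<phi> \<in> hatF m z u"
    and \<phi>\<^sub>0: "character m z \<phi>" "sigma_char m z \<phi> = {}"
    unfolding ground_character_def by blast
  show "\<psi> \<in> {\<phi>. ultracharacter m z \<phi> \<and> \<not> open_character m z \<phi>}"
  proof (cases u)
    case None
    then show ?thesis
      using \<psi> \<phi> \<phi>\<^sub>0 by (simp add: hat_theta_def open_character_def)
  next
    case (Some s)
    then have Fs: "\<phi> (Fs m z s)" using \<phi>(2) by (simp add: hatF_def)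
    have "s \<in> sigma_char m z \<psi>"
      using \<psi> Some Fs Es_Ecal by (simp add: sigma_char_def hat_theta_Some theta_pre_Es)
    then have "\<not> open_string m (sigma_char m z \<psi>)"
      using sigma_char_hat_theta[OF \<phi>\<^sub>0(1)] \<phi>\<^sub>0(2) \<psi> Some open_stringD by blast
    then show ?thesis
      using hat_theta_ultracharacter[OF \<phi>(1) Fs] \<psi> Some by (simp add: open_character_def)
  qed
qed

end

theorem theorem17p11:
  fixes m :: "'a \<Rightarrow> 'a \<Rightarrow> 'a" and z :: 'a
  assumes "semigroup_with_zero m z"
    and "zero_left_cancellative m z"
    and "admits_lcm m"
  shows "({\<phi>. ultracharacter m z \<phi> \<and> open_character m z \<phi>}
           = {phi_str m z \<sigma> | \<sigma>. is_string m z \<sigma> \<and> open_string m \<sigma> \<and> quasi_maximal m z \<sigma>})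
         \<and> ({\<phi>. ultracharacter m z \<phi> \<and> \<not> open_character m z \<phi>}
           = {hat_theta m z u \<phi> | u \<phi>. ground_character m z \<phi> \<and> ultracharacter m z \<phi>
                                      \<and> \<phi> \<in> hatF m z u})"
proof -
  interpret lcm_semigroup m z
    using assms by unfold_locales
  show ?thesis
    using open_ultracharacters non_open_ultracharacters by blast
qed

end
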